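(* Let $p\ge 1$, let $\Theta_{s,a}\subseteq\mathbb{R}^p$ be a set of vectors, and let $\{P_\beta,\ \beta\in\Theta_{s,a}\}$ be a family of probability distributions on a measurable space $(\mathcal{X},\mathcal{U})$ (extended to the support of the prior below); an observation $Y$ is drawn from $P_\beta$ and $\mathbf{E}_\beta$ denotes expectation with respect to $P_\beta$. For any $s<p$, $q\ge 1$ and any probability measure $\pi$ on $\mathbb{R}^p$ (with $\pi(\beta\in\Theta_{s,a})>0$), there exists $C_q>0$ such that $$\inf_{\hat\beta}\sup_{\beta\in\Theta_{s,a}}\mathbf{E}_\beta\|\hat\beta-\beta\|_q^q\ \ge\ \inf_{\hat T}\mathbb{E}_\pi\mathbf{E}_\beta\sum_{j=1}^p|\hat T_j(Y)-\beta_j|^q\ -\ C_q\,\mathbb{E}_\pi\Big[\big(\mathbf{E}(\|\beta^A\|_q^q\mid Y)+\|\beta\|_q^q\big)\mathbf{1}(\beta\notin\Theta_{s,a})\Big],$$ where $\beta^A:=\beta\,\mathbf{1}(\beta\in\Theta_{s,a})=(\beta_1\mathbf{1}(\beta\in\Theta_{s,a}),\dots,\beta_p\mathbf{1}(\beta\in\Theta_{s,a}))$, $\inf_{\hat\beta}$ is the infimum over all estimators, and $\inf_{\hat T}$ is the infimum over all estimators $\hat T(Y)=(\hat T_1(Y),\dots,\hat T_p(Y))$ with values in $\mathbb{R}^p$.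
   Context: $\mathbb{E}_\pi$ denotes expectation with respect to $\beta\sim\pi$ (and $\mathbb{E}_\pi\mathbf{E}_\beta$ the expectation under the joint law where $\beta\sim\pi$ and, given $\beta$, $Y\sim P_\beta$). $\mathbf{E}(\|\beta^A\|_q^q\mid Y)$ denotes the conditional expectation of $\|\beta^A\|_q^q$ given $Y$ when $\beta$ is distributed according to $\pi$ conditioned on the event $\{\beta\in\Theta_{s,a}\}$ and $Y\sim P_\beta$. $\|x\|_q$ is the $\ell_q$ norm. *)

theory Defs
  imports "HOL-Probability.Probability"
begin

definition lq_pow :: "real \<Rightarrow> real^'n \<Rightarrow> real" where
  "lq_pow q x = (\<Sum>j\<in>UNIV. \<bar>x $ j\<bar> powr q)"

definition betaA :: "(real^'n) set \<Rightarrow> real^'n \<Rightarrow> real^'n" where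
  "betaA Theta b = (\<chi> j. b $ j * indicator Theta b)"

definition cond_prior :: "(real^'n) measure \<Rightarrow> (real^'n) set \<Rightarrow> (real^'n) measure" where
  "cond_prior prior Theta = density prior (\<lambda>b. indicator Theta b / emeasure prior Theta)"

definition minimax_risk ::
  "'x measure \<Rightarrow> (real^'n \<Rightarrow> 'x measure) \<Rightarrow> (real^'n) set \<Rightarrow> real \<Rightarrow> ennreal" where
  "minimax_risk X P Theta q =
     (INF bh \<in> borel_measurable X. SUP b \<in> Theta.
        \<integral>\<^sup>+ y. ennreal (lq_pow q (bh y - b)) \<partial>(P b))"

definition bayes_risk ::
  "'x measure \<Rightarrow> (real^'n \<Rightarrow> 'x measure) \<Rightarrow> (real^'n) measure \<Rightarrow> real \<Rightarrow> ennreal" where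
  "bayes_risk X P prior q =
     (INF T \<in> borel_measurable X.
        \<integral>\<^sup>+ b. (\<integral>\<^sup>+ y. ennreal (\<Sum>j\<in>UNIV. \<bar>T y $ j - b $ j\<bar> powr q) \<partial>(P b)) \<partial>prior)"

text \<open>g is a version of E(|beta^A|_q^q | Y) under the joint law beta ~ prior( . | Theta),
  Y ~ P_beta: g(Y) is sigma(Y)-measurable and has the same integrals as |beta^A|_q^q
  over every event {Y in A}.\<close>
definition is_post_moment ::
  "'x measure \<Rightarrow> (real^'n \<Rightarrow> 'x measure) \<Rightarrow> (real^'n) measure \<Rightarrow> (real^'n) set \<Rightarrow> real
     \<Rightarrow> ('x \<Rightarrow> ennreal) \<Rightarrow> bool" where
  "is_post_moment X P prior Theta q g \<longleftrightarrow> g \<in> borel_measurable X \<and>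
     (\<forall>A \<in> sets X.
        (\<integral>\<^sup>+ b. (\<integral>\<^sup>+ y. indicator A y * g y \<partial>(P b)) \<partial>(cond_prior prior Theta)) =
        (\<integral>\<^sup>+ b. (\<integral>\<^sup>+ y. indicator A y * ennreal (lq_pow q (betaA Theta b)) \<partial>(P b))
            \<partial>(cond_prior prior Theta)))"

definition remainder_term ::
  "(real^'n \<Rightarrow> 'x measure) \<Rightarrow> (real^'n) measure \<Rightarrow> (real^'n) set \<Rightarrow> real
     \<Rightarrow> ('x \<Rightarrow> ennreal) \<Rightarrow> ennreal" where
  "remainder_term P prior Theta q g =
     (\<integral>\<^sup>+ b. (\<integral>\<^sup>+ y. (g y + ennreal (lq_pow q b)) * indicator (- Theta) b \<partial>(P b)) \<partial>prior)"

end

theory Submission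
  imports Defs
begin

text \<open>
  Fix an estimator bh and a version g of the posterior moment E(|beta^A|_q^q | Y), and set bh
  to 0 on the region where |bh|_q^q > 2^(q+1) g. There 2 g <= |bh - beta|_q^q + |beta|_q^q, and
  on Theta the defining property of g replaces the loss |beta|_q^q of the estimator 0 by g on
  average; cancelling the integral of g (finite after truncating g) shows that the modification
  does not increase the part of the Bayes risk coming from Theta, which is at most the worst-case
  risk of bh on Theta. Off Theta the modified estimator T has |T|_q^q <= 2^(q+1) g, so its loss
  is at most 2 * 4^q (g + |beta|_q^q). Taking the infimum over bh gives C_q = 2 * 4^q.
\<close>

lemma lq_pow_measurable [measurable]: "lq_pow q \<in> borel_measurable borel"
  unfolding lq_pow_def by measurable

lemma lq_pow_nonneg: "lq_pow q x \<ge> 0"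
  unfolding lq_pow_def by (intro sum_nonneg) auto

lemma lq_pow_zero: "q > 0 \<Longrightarrow> lq_pow q 0 = 0"
  unfolding lq_pow_def by simp

lemma lq_pow_uminus: "lq_pow q (- x) = lq_pow q x"
  unfolding lq_pow_def by simp

lemma abs_add_powr_le:
  fixes a b :: real
  assumes "q \<ge> 1"
  shows "\<bar>a + b\<bar> powr q \<le> 2 powr q * (\<bar>a\<bar> powr q + \<bar>b\<bar> powr q)"
proof -
  have "\<bar>a + b\<bar> powr q \<le> (2 * max \<bar>a\<bar> \<bar>b\<bar>) powr q"
    using assms by (intro powr_mono2) auto
  also have "\<dots> = 2 powr q * max \<bar>a\<bar> \<bar>b\<bar> powr q"
    by (simp add: powr_mult)
  also have "\<dots> \<le> 2 powr q * (\<bar>a\<bar> powr q + \<bar>b\<bar> powr q)"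
    by (intro mult_left_mono) (simp_all add: max_def)
  finally show ?thesis .
qed

lemma lq_pow_add_le:
  assumes "q \<ge> 1"
  shows "lq_pow q (x + y) \<le> 2 powr q * (lq_pow q x + lq_pow q y)"
  unfolding lq_pow_def sum_distrib_left sum.distrib[symmetric]
  by (intro sum_mono) (metis abs_add_powr_le[OF assms] distrib_left vector_add_component)

lemma betaA_eq_scaleR: "betaA Theta b = (indicator Theta b :: real) *\<^sub>R b"
  by (simp add: betaA_def vec_eq_iff mult.commute)

lemma INF_image_ennreal_add_const:
  fixes f :: "'a \<Rightarrow> ennreal"
  assumes "I \<noteq> {}"
  shows "(INF i\<in>I. f i + c) = (INF i\<in>I. f i) + c"
  using continuous_at_Inf_mono[of "\<lambda>x. x + c" "f ` I"]
    continuous_add[of "at_right (Inf (f ` I))" "\<lambda>x. x" "\<lambda>x. c"] assms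
  by (auto simp: mono_def image_comp)

lemma nn_integral_cond_prior:
  assumes Theta: "Theta \<in> sets M" "emeasure M Theta \<noteq> 0" "emeasure M Theta \<noteq> \<infinity>"
    and f: "f \<in> borel_measurable M"
  shows "emeasure M Theta * (\<integral>\<^sup>+b. f b \<partial>cond_prior M Theta) = (\<integral>\<^sup>+b. f b * indicator Theta b \<partial>M)"
proof -
  have "emeasure M Theta * (\<integral>\<^sup>+b. f b \<partial>cond_prior M Theta)
      = (\<integral>\<^sup>+b. emeasure M Theta * (indicator Theta b / emeasure M Theta * f b) \<partial>M)"
    unfolding cond_prior_def using Theta f
    by (simp add: nn_integral_density nn_integral_cmult)
  also have "\<dots> = (\<integral>\<^sup>+b. f b * indicator Theta b \<partial>M)"
    using Theta by (intro nn_integral_cong)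
      (simp add: ennreal_times_divide mult.commute mult_divide_eq_ennreal split: split_indicator)
  finally show ?thesis .
qed

definition joint_law :: "'b measure \<Rightarrow> 'x measure \<Rightarrow> ('b \<Rightarrow> 'x measure) \<Rightarrow> ('b \<times> 'x) measure" where
  "joint_law M X K = M \<bind> (\<lambda>b. distr (K b) (M \<Otimes>\<^sub>M X) (Pair b))"

lemma measurable_joint_kernel:
  assumes "K \<in> M \<rightarrow>\<^sub>M subprob_algebra X"
  shows "(\<lambda>b. distr (K b) (M \<Otimes>\<^sub>M X) (Pair b)) \<in> M \<rightarrow>\<^sub>M subprob_algebra (M \<Otimes>\<^sub>M X)"
  by (rule measurable_distr2[OF _ assms]) simp

lemma nn_integral_joint_law:
  assumes K: "K \<in> M \<rightarrow>\<^sub>M subprob_algebra X" and f: "f \<in> borel_measurable (M \<Otimes>\<^sub>M X)"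
  shows "(\<integral>\<^sup>+z. f z \<partial>joint_law M X K) = (\<integral>\<^sup>+b. \<integral>\<^sup>+y. f (b, y) \<partial>K b \<partial>M)"
  unfolding joint_law_def nn_integral_bind[OF f measurable_joint_kernel[OF K]]
proof (intro nn_integral_cong)
  fix b assume "b \<in> space M"
  then have "sets (K b) = sets X" by (rule subprob_measurableD(2)[OF K])
  then show "(\<integral>\<^sup>+z. f z \<partial>distr (K b) (M \<Otimes>\<^sub>M X) (Pair b)) = (\<integral>\<^sup>+y. f (b, y) \<partial>K b)"
    using \<open>b \<in> space M\<close> f by (subst nn_integral_distr) auto
qed

lemma subprob_space_joint_law:
  assumes "subprob_space M" "K \<in> M \<rightarrow>\<^sub>M subprob_algebra X"
  shows "subprob_space (joint_law M X K)"
  unfolding joint_law_def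
  by (rule subprob_space_bind[OF assms(1) measurable_joint_kernel[OF assms(2)]])

lemma sets_joint_law:
  assumes "K \<in> M \<rightarrow>\<^sub>M subprob_algebra X" "space M \<noteq> {}"
  shows "sets (joint_law M X K) = sets (M \<Otimes>\<^sub>M X)"
  unfolding joint_law_def
  by (rule sets_bind_measurable[OF measurable_joint_kernel[OF assms(1)] assms(2)])

text \<open>The cancellation argument with abstract integrands: \<open>v\<close> stands for the posterior moment,
  \<open>u\<close> and \<open>w\<close> for the losses of the estimator \<open>0\<close> and of the given estimator.\<close>

lemma nn_integral_indicator_le_of_exhaustion:
  fixes u v w :: "'a \<Rightarrow> ennreal"
  assumes [measurable]: "u \<in> borel_measurable M" "v \<in> borel_measurable M" "w \<in> borel_measurable M"
    and A: "range A \<subseteq> sets M" "incseq A"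
    and same: "\<And>k. (\<integral>\<^sup>+x. v x * indicator (A k) x \<partial>M) = (\<integral>\<^sup>+x. u x * indicator (A k) x \<partial>M)"
    and finite: "\<And>k. (\<integral>\<^sup>+x. v x * indicator (A k) x \<partial>M) \<noteq> \<infinity>"
    and dominated: "\<And>x. x \<in> (\<Union>k. A k) \<Longrightarrow> 2 * v x \<le> w x + u x"
  shows "(\<integral>\<^sup>+x. u x * indicator (\<Union>k. A k) x \<partial>M) \<le> (\<integral>\<^sup>+x. w x * indicator (\<Union>k. A k) x \<partial>M)"
proof -
  have bound: "(\<integral>\<^sup>+x. u x * indicator (A k) x \<partial>M) \<le> (\<integral>\<^sup>+x. w x * indicator (\<Union>k. A k) x \<partial>M)" for k
  proof -
    let ?V = "\<integral>\<^sup>+x. v x * indicator (A k) x \<partial>M" and ?W = "\<integral>\<^sup>+x. w x * indicator (A k) x \<partial>M"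
    have "?V + ?V = (\<integral>\<^sup>+x. 2 * v x * indicator (A k) x \<partial>M)"
      using A by (subst nn_integral_add[symmetric])
        (auto intro!: nn_integral_cong simp: mult_2 distrib_right)
    also have "\<dots> \<le> (\<integral>\<^sup>+x. w x * indicator (A k) x + u x * indicator (A k) x \<partial>M)"
      using dominated by (intro nn_integral_mono) (auto split: split_indicator simp: distrib_right)
    also have "\<dots> = ?W + ?V"
      using A by (simp add: nn_integral_add same)
    finally have "?V \<le> ?W"
      using finite by (simp add: add.commute ennreal_add_left_cancel_le)
    also have "?W \<le> (\<integral>\<^sup>+x. w x * indicator (\<Union>k. A k) x \<partial>M)"
      by (intro nn_integral_mono) (auto split: split_indicator)
    finally show ?thesis
      by (simp add: same)
  qed
  have "(\<integral>\<^sup>+x. u x * indicator (\<Union>k. A k) x \<partial>M) = emeasure (density M u) (\<Union>k. A k)"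
    using A by (simp add: emeasure_density sets.countable_UN')
  also have "\<dots> = (SUP k. emeasure (density M u) (A k))"
    using A by (intro SUP_emeasure_incseq[symmetric]) auto
  also have "\<dots> \<le> (\<integral>\<^sup>+x. w x * indicator (\<Union>k. A k) x \<partial>M)"
    using A bound by (auto intro!: SUP_least simp: emeasure_density)
  finally show ?thesis .
qed

locale bayes_model =
  fixes X :: "'x measure" and P :: "real^'n \<Rightarrow> 'x measure"
    and prior :: "(real^'n) measure" and Theta :: "(real^'n) set" and q :: real
  assumes q_ge_1: "q \<ge> 1"
    and Theta_borel [measurable]: "Theta \<in> sets borel"
    and P_kernel [measurable]: "P \<in> borel \<rightarrow>\<^sub>M subprob_algebra X"
    and prob_space_prior: "prob_space prior"
    and sets_prior [measurable_cong]: "sets prior = sets borel"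
    and prior_Theta_pos: "emeasure prior Theta > 0"
begin

lemma nn_integral_P_measurable [measurable]:
  assumes "(\<lambda>(b, y). f b y) \<in> borel_measurable (borel \<Otimes>\<^sub>M X)"
  shows "(\<lambda>b. \<integral>\<^sup>+y. f b y \<partial>P b) \<in> borel_measurable borel"
  using assms P_kernel by (rule nn_integral_measurable_subprob_algebra2)

abbreviation joint :: "((real^'n) \<times> 'x) measure" where
  "joint \<equiv> joint_law prior X P"

lemma P_kernel_prior: "P \<in> prior \<rightarrow>\<^sub>M subprob_algebra X"
  using P_kernel by (simp add: measurable_cong_sets[OF sets_prior refl])

lemma sets_joint [measurable_cong]: "sets joint = sets (borel \<Otimes>\<^sub>M X)"
proof -
  have "space prior \<noteq> {}"
    using sets_eq_imp_space_eq[OF sets_prior] by simp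
  then show ?thesis
    using sets_joint_law[OF P_kernel_prior] sets_pair_measure_cong[OF sets_prior refl] by simp
qed

lemma space_joint: "space joint = UNIV \<times> space X"
  using sets_eq_imp_space_eq[OF sets_joint] by (simp add: space_pair_measure)

lemma nn_integral_joint:
  assumes "f \<in> borel_measurable (borel \<Otimes>\<^sub>M X)"
  shows "(\<integral>\<^sup>+z. f z \<partial>joint) = (\<integral>\<^sup>+b. \<integral>\<^sup>+y. f (b, y) \<partial>P b \<partial>prior)"
  using assms by (intro nn_integral_joint_law[OF P_kernel_prior])
    (simp add: measurable_cong_sets[OF sets_pair_measure_cong[OF sets_prior refl] refl])

lemma emeasure_joint_finite: "emeasure joint (space joint) \<noteq> \<infinity>"
proof -
  interpret subprob_space joint
    using prob_space_prior P_kernel_prior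
    by (intro subprob_space_joint_law) (auto intro: prob_space_imp_subprob_space)
  show ?thesis by simp
qed

lemma prior_Theta_nonzero_finite:
  "Theta \<in> sets prior" "emeasure prior Theta \<noteq> 0" "emeasure prior Theta \<noteq> \<infinity>"
  using prior_Theta_pos prob_space.emeasure_le_1[OF prob_space_prior, of Theta]
  by (auto simp: top_unique)

lemma nn_integral_joint_indicator:
  assumes [measurable]: "(\<lambda>(b, y). f b y) \<in> borel_measurable (borel \<Otimes>\<^sub>M X)" "S \<in> sets borel"
  shows "(\<integral>\<^sup>+(b, y). f b y * indicator S b \<partial>joint) = (\<integral>\<^sup>+b. (\<integral>\<^sup>+y. f b y \<partial>P b) * indicator S b \<partial>prior)"
  by (subst nn_integral_joint) (auto intro!: nn_integral_cong nn_integral_multc measurable_Pair2)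

lemma nn_integral_joint_Theta_le_sup_risk:
  assumes [measurable]: "T \<in> borel_measurable X"
  shows "(\<integral>\<^sup>+(b, y). ennreal (lq_pow q (T y - b)) * indicator Theta b \<partial>joint)
    \<le> (SUP b\<in>Theta. \<integral>\<^sup>+y. ennreal (lq_pow q (T y - b)) \<partial>P b)"
    (is "_ \<le> (SUP b\<in>Theta. ?risk b)")
proof -
  have "(\<integral>\<^sup>+(b, y). ennreal (lq_pow q (T y - b)) * indicator Theta b \<partial>joint)
      = (\<integral>\<^sup>+b. ?risk b * indicator Theta b \<partial>prior)"
    by (simp add: nn_integral_joint_indicator)
  also have "\<dots> \<le> (\<integral>\<^sup>+b. (SUP b\<in>Theta. ?risk b) * indicator Theta b \<partial>prior)"
    by (intro nn_integral_mono) (auto intro: SUP_upper split: split_indicator)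
  also have "\<dots> = (SUP b\<in>Theta. ?risk b) * emeasure prior Theta"
    using prior_Theta_nonzero_finite by (simp add: nn_integral_cmult_indicator)
  also have "\<dots> \<le> (SUP b\<in>Theta. ?risk b)"
    using prob_space.emeasure_le_1[OF prob_space_prior] by (intro mult_left_le) auto
  finally show ?thesis .
qed

lemma nn_integral_joint_post_moment:
  assumes post: "is_post_moment X P prior Theta q g" and B [measurable]: "B \<in> sets X"
  shows "(\<integral>\<^sup>+(b, y). indicator B y * g y * indicator Theta b \<partial>joint)
       = (\<integral>\<^sup>+(b, y). indicator B y * ennreal (lq_pow q b) * indicator Theta b \<partial>joint)"
proof -
  have [measurable]: "g \<in> borel_measurable X"
    using post by (simp add: is_post_moment_def)
  have "(\<integral>\<^sup>+(b, y). indicator B y * g y * indicator Theta b \<partial>joint)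
      = emeasure prior Theta * (\<integral>\<^sup>+b. \<integral>\<^sup>+y. indicator B y * g y \<partial>P b \<partial>cond_prior prior Theta)"
    by (simp add: nn_integral_joint_indicator nn_integral_cond_prior[OF prior_Theta_nonzero_finite])
  also have "\<dots> = emeasure prior Theta *
      (\<integral>\<^sup>+b. \<integral>\<^sup>+y. indicator B y * ennreal (lq_pow q (betaA Theta b)) \<partial>P b \<partial>cond_prior prior Theta)"
    using post by (simp add: is_post_moment_def)
  also have "\<dots> = (\<integral>\<^sup>+b. (\<integral>\<^sup>+y. indicator B y * ennreal (lq_pow q (betaA Theta b)) \<partial>P b) * indicator Theta b \<partial>prior)"
    unfolding betaA_eq_scaleR
    by (rule nn_integral_cond_prior[OF prior_Theta_nonzero_finite]) measurable
  also have "\<dots> = (\<integral>\<^sup>+(b, y). indicator B y * ennreal (lq_pow q b) * indicator Theta b \<partial>joint)"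
    by (auto simp: nn_integral_joint_indicator betaA_eq_scaleR intro!: nn_integral_cong
      split: split_indicator)
  finally show ?thesis .
qed

end

locale bayes_model_estimator = bayes_model X P prior Theta q
  for X :: "'x measure" and P :: "real^'n \<Rightarrow> 'x measure" and prior Theta q +
  fixes g :: "'x \<Rightarrow> ennreal" and bh :: "'x \<Rightarrow> real^'n"
  assumes post_moment: "is_post_moment X P prior Theta q g"
    and bh_measurable [measurable]: "bh \<in> borel_measurable X"
begin

lemma g_measurable [measurable]: "g \<in> borel_measurable X"
  using post_moment by (simp add: is_post_moment_def)

definition zero_region :: "'x set" where
  "zero_region = {y \<in> space X. 2 * g y < ennreal (lq_pow q (bh y) / 2 powr q)}"

definition shrunk :: "'x \<Rightarrow> real^'n" where
  "shrunk y = (if y \<in> zero_region then 0 else bh y)"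

lemma zero_region_sets [measurable]: "zero_region \<in> sets X"
  unfolding zero_region_def by measurable

lemma shrunk_measurable [measurable]: "shrunk \<in> borel_measurable X"
  unfolding shrunk_def by measurable

lemma lq_pow_shrunk_le:
  assumes "y \<in> space X"
  shows "ennreal (lq_pow q (shrunk y)) \<le> ennreal (2 powr q) * (2 * g y)"
proof (cases "y \<in> zero_region")
  case False
  have "ennreal (lq_pow q (bh y)) = ennreal (2 powr q) * ennreal (lq_pow q (bh y) / 2 powr q)"
    by (simp add: lq_pow_nonneg flip: ennreal_mult)
  also have "\<dots> \<le> ennreal (2 powr q) * (2 * g y)"
    using False assms by (intro mult_left_mono) (simp_all add: zero_region_def not_less)
  finally show ?thesis
    using False by (simp add: shrunk_def)
qed (use q_ge_1 in \<open>simp add: shrunk_def lq_pow_zero\<close>)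

lemma twice_g_le_in_zero_region:
  assumes "y \<in> zero_region"
  shows "2 * g y \<le> ennreal (lq_pow q (bh y - b)) + ennreal (lq_pow q b)"
proof -
  have "lq_pow q (bh y) \<le> 2 powr q * (lq_pow q (bh y - b) + lq_pow q b)"
    using lq_pow_add_le[OF q_ge_1, of "bh y - b" b] by simp
  then have "lq_pow q (bh y) / 2 powr q \<le> lq_pow q (bh y - b) + lq_pow q b"
    by (simp add: divide_le_eq mult.commute)
  then have "ennreal (lq_pow q (bh y) / 2 powr q) \<le> ennreal (lq_pow q (bh y - b)) + ennreal (lq_pow q b)"
    by (simp add: lq_pow_nonneg flip: ennreal_plus)
  then show ?thesis
    using assms unfolding zero_region_def by (auto intro: order.trans less_imp_le)
qed

lemma g_less_top_in_zero_region:
  assumes "y \<in> zero_region"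
  shows "g y < top"
proof -
  have "2 * g y < top"
    using assms ennreal_less_top order.strict_trans unfolding zero_region_def by blast
  then show ?thesis
    by (auto simp: ennreal_mult_less_top)
qed

lemma nn_integral_zero_region_le:
  "(\<integral>\<^sup>+(b, y). ennreal (lq_pow q b) * indicator Theta b * indicator zero_region y \<partial>joint)
   \<le> (\<integral>\<^sup>+(b, y). ennreal (lq_pow q (bh y - b)) * indicator Theta b * indicator zero_region y \<partial>joint)"
proof -
  \<comment> \<open>Truncating g makes its integrals finite, so that they can be cancelled.\<close>
  define Z where "Z k = zero_region \<inter> {y \<in> space X. g y \<le> of_nat k}" for k :: nat
  have Z_sets [measurable]: "Z k \<in> sets X" for k
    unfolding Z_def by measurable
  have Union_Z: "(\<Union>k. UNIV \<times> Z k) = UNIV \<times> zero_region"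
  proof -
    have "\<exists>k. g y \<le> of_nat k" if "y \<in> zero_region" for y
      using ennreal_Ex_less_of_nat[OF g_less_top_in_zero_region[OF that]] less_imp_le by blast
    then show ?thesis
      using sets.sets_into_space[OF zero_region_sets] by (auto simp: Z_def)
  qed
  let ?u = "\<lambda>(b, y). ennreal (lq_pow q b) * indicator Theta b"
  let ?v = "\<lambda>(b, y). g y * indicator Theta b"
  let ?w = "\<lambda>(b, y). ennreal (lq_pow q (bh y - b)) * indicator Theta b"
  have "(\<integral>\<^sup>+z. ?u z * indicator (\<Union>k. UNIV \<times> Z k) z \<partial>joint)
      \<le> (\<integral>\<^sup>+z. ?w z * indicator (\<Union>k. UNIV \<times> Z k) z \<partial>joint)"
  proof (rule nn_integral_indicator_le_of_exhaustion[where v = ?v])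
    show "range (\<lambda>k. UNIV \<times> Z k) \<subseteq> sets joint"
      by auto
    show "incseq (\<lambda>k. UNIV \<times> Z k)"
      by (auto simp: incseq_def Z_def intro: order_trans)
    show "(\<integral>\<^sup>+z. ?v z * indicator (UNIV \<times> Z k) z \<partial>joint)
        = (\<integral>\<^sup>+z. ?u z * indicator (UNIV \<times> Z k) z \<partial>joint)" for k
      using nn_integral_joint_post_moment[OF post_moment Z_sets[of k]]
      by (simp add: split_beta' indicator_times ac_simps)
    show "(\<integral>\<^sup>+z. ?v z * indicator (UNIV \<times> Z k) z \<partial>joint) \<noteq> \<infinity>" for k
    proof -
      have "(\<integral>\<^sup>+z. ?v z * indicator (UNIV \<times> Z k) z \<partial>joint) \<le> (\<integral>\<^sup>+z. of_nat k \<partial>joint)"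
        by (intro nn_integral_mono) (auto simp: Z_def split: split_indicator)
      also have "\<dots> < top"
        using emeasure_joint_finite
        by (simp add: ennreal_mult_less_top of_nat_less_top top.not_eq_extremum)
      finally show ?thesis by simp
    qed
    show "2 * ?v z \<le> ?w z + ?u z" if "z \<in> (\<Union>k. UNIV \<times> Z k)" for z
      using that twice_g_le_in_zero_region[of "snd z" "fst z"]
      by (auto simp: Union_Z split_beta' split: split_indicator)
    show "?u \<in> borel_measurable joint"
      by measurable
    show "?v \<in> borel_measurable joint"
      by measurable
    show "?w \<in> borel_measurable joint"
      by measurable
  qed
  then show ?thesis
    by (simp add: Union_Z split_beta' indicator_times ac_simps)
qed

lemma risk_shrunk_Theta_le:
  "(\<integral>\<^sup>+(b, y). ennreal (lq_pow q (shrunk y - b)) * indicator Theta b \<partial>joint)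
   \<le> (\<integral>\<^sup>+(b, y). ennreal (lq_pow q (bh y - b)) * indicator Theta b \<partial>joint)"
proof -
  have "(\<integral>\<^sup>+(b, y). ennreal (lq_pow q (shrunk y - b)) * indicator Theta b \<partial>joint)
      = (\<integral>\<^sup>+(b, y). ennreal (lq_pow q b) * indicator Theta b * indicator zero_region y \<partial>joint)
        + (\<integral>\<^sup>+(b, y). ennreal (lq_pow q (bh y - b)) * indicator Theta b * indicator (space X - zero_region) y \<partial>joint)"
    by (subst nn_integral_add[symmetric])
      (auto intro!: nn_integral_cong simp: space_joint shrunk_def lq_pow_uminus
        split: split_indicator)
  also have "\<dots> \<le> (\<integral>\<^sup>+(b, y). ennreal (lq_pow q (bh y - b)) * indicator Theta b * indicator zero_region y \<partial>joint)
        + (\<integral>\<^sup>+(b, y). ennreal (lq_pow q (bh y - b)) * indicator Theta b * indicator (space X - zero_region) y \<partial>joint)"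
    by (intro add_right_mono nn_integral_zero_region_le)
  also have "\<dots> = (\<integral>\<^sup>+(b, y). ennreal (lq_pow q (bh y - b)) * indicator Theta b \<partial>joint)"
    by (subst nn_integral_add[symmetric])
      (auto intro!: nn_integral_cong simp: space_joint split: split_indicator)
  finally show ?thesis .
qed

lemma lq_pow_shrunk_diff_le:
  assumes "y \<in> space X"
  shows "ennreal (lq_pow q (shrunk y - b)) \<le> ennreal (2 * 4 powr q) * (g y + ennreal (lq_pow q b))"
proof -
  define t where "t = ennreal (2 powr q)"
  have "1 \<le> t"
    using q_ge_1 by (simp add: t_def ge_one_powr_ge_zero)
  have "ennreal (lq_pow q (shrunk y - b)) \<le> ennreal (2 powr q * (lq_pow q (shrunk y) + lq_pow q b))"
    using lq_pow_add_le[OF q_ge_1, of "shrunk y" "- b"]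
    by (intro ennreal_leI) (simp add: lq_pow_uminus)
  also have "\<dots> = t * (ennreal (lq_pow q (shrunk y)) + ennreal (lq_pow q b))"
    by (simp add: t_def lq_pow_nonneg ennreal_mult flip: ennreal_plus)
  also have "\<dots> \<le> t * (t * (2 * g y) + t * 2 * ennreal (lq_pow q b))"
  proof -
    have "1 \<le> t * 2"
      using \<open>1 \<le> t\<close> by (metis add_increasing2 mult_2_right zero_le)
    then have "ennreal (lq_pow q b) \<le> t * 2 * ennreal (lq_pow q b)"
      using mult_right_mono[of 1 "t * 2" "ennreal (lq_pow q b)"] by simp
    then show ?thesis
      using lq_pow_shrunk_le[OF assms] by (intro mult_left_mono add_mono) (simp_all add: t_def)
  qed
  also have "\<dots> = ennreal (2 * 4 powr q) * (g y + ennreal (lq_pow q b))"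
    by (simp add: t_def ennreal_mult powr_mult[of 2 2 q, simplified] algebra_simps)
  finally show ?thesis .
qed

lemma risk_shrunk_not_Theta_le:
  "(\<integral>\<^sup>+(b, y). ennreal (lq_pow q (shrunk y - b)) * indicator (- Theta) b \<partial>joint)
   \<le> ennreal (2 * 4 powr q) * remainder_term P prior Theta q g"
proof -
  have "(\<integral>\<^sup>+(b, y). ennreal (lq_pow q (shrunk y - b)) * indicator (- Theta) b \<partial>joint)
      \<le> (\<integral>\<^sup>+(b, y). ennreal (2 * 4 powr q) * ((g y + ennreal (lq_pow q b)) * indicator (- Theta) b) \<partial>joint)"
    using lq_pow_shrunk_diff_le
    by (intro nn_integral_mono) (auto simp: space_joint split: split_indicator)
  also have "\<dots> = ennreal (2 * 4 powr q) * remainder_term P prior Theta q g"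
    unfolding remainder_term_def
    by (simp add: nn_integral_cmult nn_integral_joint)
  finally show ?thesis .
qed

lemma bayes_risk_le_sup_risk_plus_remainder:
  "bayes_risk X P prior q
   \<le> (SUP b\<in>Theta. \<integral>\<^sup>+y. ennreal (lq_pow q (bh y - b)) \<partial>P b)
     + ennreal (2 * 4 powr q) * remainder_term P prior Theta q g"
proof -
  have "bayes_risk X P prior q \<le> (\<integral>\<^sup>+(b, y). ennreal (lq_pow q (shrunk y - b)) \<partial>joint)"
    unfolding bayes_risk_def
    by (rule INF_lower2[OF shrunk_measurable])
      (subst nn_integral_joint, measurable, simp add: lq_pow_def)
  also have "\<dots> = (\<integral>\<^sup>+(b, y). ennreal (lq_pow q (shrunk y - b)) * indicator Theta b \<partial>joint)
      + (\<integral>\<^sup>+(b, y). ennreal (lq_pow q (shrunk y - b)) * indicator (- Theta) b \<partial>joint)"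
    by (subst nn_integral_add[symmetric]) (auto intro!: nn_integral_cong split: split_indicator)
  also have "\<dots> \<le> (\<integral>\<^sup>+(b, y). ennreal (lq_pow q (bh y - b)) * indicator Theta b \<partial>joint)
      + ennreal (2 * 4 powr q) * remainder_term P prior Theta q g"
    by (intro add_mono risk_shrunk_Theta_le risk_shrunk_not_Theta_le)
  also have "\<dots> \<le> (SUP b\<in>Theta. \<integral>\<^sup>+y. ennreal (lq_pow q (bh y - b)) \<partial>P b)
      + ennreal (2 * 4 powr q) * remainder_term P prior Theta q g"
    by (intro add_right_mono nn_integral_joint_Theta_le_sup_risk bh_measurable)
  finally show ?thesis .
qed

end

context bayes_model
begin

lemma bayes_risk_le_minimax_risk_plus_remainder:
  assumes "is_post_moment X P prior Theta q g"
  shows "bayes_risk X P prior q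
    \<le> minimax_risk X P Theta q + ennreal (2 * 4 powr q) * remainder_term P prior Theta q g"
proof -
  have "bayes_risk X P prior q
      \<le> (SUP b\<in>Theta. \<integral>\<^sup>+y. ennreal (lq_pow q (bh y - b)) \<partial>P b)
        + ennreal (2 * 4 powr q) * remainder_term P prior Theta q g"
    if "bh \<in> borel_measurable X" for bh
  proof -
    interpret bayes_model_estimator X P prior Theta q g bh
      using assms that by unfold_locales
    show ?thesis
      by (rule bayes_risk_le_sup_risk_plus_remainder)
  qed
  then have "bayes_risk X P prior q
      \<le> (INF bh\<in>borel_measurable X. (SUP b\<in>Theta. \<integral>\<^sup>+y. ennreal (lq_pow q (bh y - b)) \<partial>P b)
        + ennreal (2 * 4 powr q) * remainder_term P prior Theta q g)"
    by (rule INF_greatest)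
  also have "\<dots> = minimax_risk X P Theta q + ennreal (2 * 4 powr q) * remainder_term P prior Theta q g"
    unfolding minimax_risk_def
    by (rule INF_image_ennreal_add_const) (use borel_measurable_const in blast)
  finally show ?thesis .
qed

end

theorem theorem1:
  fixes X :: "'x measure" and P :: "real^'n \<Rightarrow> 'x measure"
    and prior :: "(real^'n) measure" and Theta :: "(real^'n) set" and q :: real
  assumes "q \<ge> 1"
    and "Theta \<in> sets borel"
    and "\<And>b. prob_space (P b)"
    and "\<And>b. sets (P b) = sets X"
    and "P \<in> borel \<rightarrow>\<^sub>M subprob_algebra X"
    and "prob_space prior"
    and "sets prior = sets borel"
    and "emeasure prior Theta > 0"
  shows "\<exists>C::real > 0. \<forall>g. is_post_moment X P prior Theta q g \<longrightarrow>
           bayes_risk X P prior q \<le> minimax_risk X P Theta q + ennreal C * remainder_term P prior Theta q g"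
proof -
  interpret bayes_model X P prior Theta q
    by (rule bayes_model.intro[OF assms(1,2,5-8)])
  show ?thesis
    using bayes_risk_le_minimax_risk_plus_remainder by (intro exI[of _ "2 * 4 powr q"]) auto
qed

end
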